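(* Let $k\ge 2$, $x_0\in\Sigma_k^*$, and $x_{n+1}=\mathcal P_k(x_n)$. Then there exists $N\ge 0$ such that $|x_n|\le \left\lceil \frac{2k^2}{k-1}\right\rceil$ for all $n\ge N$. Moreover $|x_n|\le \max\left\{|x_0|,\left\lceil \frac{2k^2}{k-1}\right\rceil\right\}$ for all $n\ge 0$. In particular, every fixed point of $\mathcal P_k$, and every word lying on a cycle of $\mathcal P_k$, has length at most $\left\lceil \frac{2k^2}{k-1}\right\rceil$.
   Context: Fix an integer $k\ge 2$ and the alphabet $\Sigma_k=\{0,1,\dots,k-1\}$. A word is a finite nonempty string of letters of $\Sigma_k$ (leading zeros allowed); $\Sigma_k^*$ denotes the set of words. For a word $x$, $|x|$ denotes its length and $|x|_i$ the number of occurrences of the letter $i$ in $x$. For a positive integer $c$, $[c]_k$ denotes its standard base-$k$ representation without leading zeros, viewed as a word over $\Sigma_k$; it has $\lfloor\log_k c\rfloor+1$ letters. The map $\mathcal P_k:\Sigma_k^*\to\Sigma_k^*$ is defined as follows: if $b_1>b_2>\dots>b_r$ are exactly the letters occurring in $x$ (i.e. those with $|x|_{b_j}\neq 0$), then $\mathcal P_k(x)=[|x|_{b_1}]_k\,b_1\,[|x|_{b_2}]_k\,b_2\cdots[|x|_{b_r}]_k\,b_r$ (concatenation). A fixed point is a word $x$ with $\mathcal P_k(x)=x$; a word $x$ lies on a cycle if $\mathcal P_k^{p}(x)=x$ for some $p\ge 1$. *)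

theory Defs
  imports Complex_Main
begin

function digits_le :: "nat \<Rightarrow> nat \<Rightarrow> nat list" where
  "digits_le k c = (if k < 2 \<or> c = 0 then [] else c mod k # digits_le k (c div k))"
  by pat_completeness auto
termination
  by (relation "measure (\<lambda>(k, c). c)") auto

definition base_repr :: "nat \<Rightarrow> nat \<Rightarrow> nat list" where
  "base_repr k c = rev (digits_le k c)"

definition is_word :: "nat \<Rightarrow> nat list \<Rightarrow> bool" where
  "is_word k x \<longleftrightarrow> x \<noteq> [] \<and> set x \<subseteq> {..<k}"

definition Pk :: "nat \<Rightarrow> nat list \<Rightarrow> nat list" where
  "Pk k x = concat (map (\<lambda>b. base_repr k (count_list x b) @ [b])
                        (rev (sorted_list_of_set (set x))))"

definition lenbound :: "nat \<Rightarrow> nat" where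
  "lenbound k = nat \<lceil>(2 * real k ^ 2) / (real k - 1)\<rceil>"

end

theory Submission
  imports Defs
begin

text \<open>A letter occurring c times contributes the |[c]_k| + 1 letters of [c]_k b to P_k(x), and
  k |[c]_k| \<le> c + k.  Summing over the at most k distinct letters gives
  k |P_k(x)| \<le> |x| + 2k^2 \<le> |x| + (k - 1) L with L = \<lceil>2k^2/(k - 1)\<rceil>, so every step either
  lands at length \<le> L or strictly shortens the word.  An orbit therefore never exceeds
  max |x_0| L, drops to length \<le> L after finitely many steps, and cannot return to a
  word longer than L.\<close>

declare digits_le.simps [simp del]

lemma digits_le_0 [simp]: "digits_le k 0 = []"
  by (subst digits_le.simps) simp

lemma set_digits_le_subset: "set (digits_le k c) \<subseteq> {..<k}"
  by (induction k c rule: digits_le.induct) (subst digits_le.simps; auto)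

lemma power_length_digits_le:
  "2 \<le> k \<Longrightarrow> 0 < c \<Longrightarrow> k ^ length (digits_le k c) \<le> k * c"
proof (induction k c rule: digits_le.induct)
  case (1 k c)
  have digits: "digits_le k c = c mod k # digits_le k (c div k)"
    using "1.prems" by (subst digits_le.simps) simp
  show ?case
  proof (cases "c div k = 0")
    case True
    then show ?thesis using digits "1.prems" by simp
  next
    case False
    then have "k ^ length (digits_le k (c div k)) \<le> k * (c div k)"
      using "1.IH" "1.prems" by simp
    then have "k ^ length (digits_le k c) \<le> k * (k * (c div k))"
      using digits by simp
    also have "\<dots> \<le> k * c"
      by (simp add: mult.commute[of k "c div k"])
    finally show ?thesis .
  qed
qed

lemma mult_le_power: "2 \<le> (k::nat) \<Longrightarrow> k * n \<le> k ^ n"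
proof (induction n)
  case (Suc n)
  show ?case
  proof (cases "n = 0")
    case False
    have "k ^ 1 \<le> k ^ n"
      using False Suc.prems by (intro power_increasing) auto
    then have "k \<le> k ^ n" by simp
    then have "k * Suc n \<le> 2 * k ^ n" using Suc by simp
    also have "\<dots> \<le> k * k ^ n" using Suc.prems by simp
    finally show ?thesis by simp
  qed simp
qed simp

lemma length_base_repr_le:
  assumes k: "2 \<le> k" and c: "0 < c"
  shows "k * length (base_repr k c) \<le> c + k"
proof -
  define m where "m = length (digits_le k c)"
  have "digits_le k c \<noteq> []"
    using k c by (subst digits_le.simps) simp
  then have m: "m = Suc (m - 1)" unfolding m_def by simp
  have "k * k ^ (m - 1) \<le> k * c"
    using power_length_digits_le[OF k c] m unfolding m_def by (metis power_Suc)
  then have "k ^ (m - 1) \<le> c" using k by simp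
  moreover have "k * (m - 1) \<le> k ^ (m - 1)" using mult_le_power[OF k] .
  ultimately have "k * m \<le> c + k" by (subst m) simp
  then show ?thesis unfolding base_repr_def m_def by simp
qed

lemma length_Pk:
  "length (Pk k x) = (\<Sum>b\<in>set x. length (base_repr k (count_list x b)) + 1)"
proof -
  have "length (Pk k x) = sum_list (map (\<lambda>b. length (base_repr k (count_list x b)) + 1)
             (rev (sorted_list_of_set (set x))))"
    unfolding Pk_def by (simp add: length_concat comp_def)
  also have "\<dots> = (\<Sum>b\<in>set x. length (base_repr k (count_list x b)) + 1)"
    by (subst sum_list_distinct_conv_sum_set) auto
  finally show ?thesis .
qed

lemma set_Pk_subset:
  assumes "set x \<subseteq> {..<k}"
  shows "set (Pk k x) \<subseteq> {..<k}"
  using assms set_digits_le_subset unfolding Pk_def base_repr_def by fastforce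

lemma length_Pk_le:
  assumes k: "2 \<le> k"
  shows "k * length (Pk k x) \<le> length x + 2 * k * card (set x)"
proof -
  have "k * length (Pk k x) = (\<Sum>b\<in>set x. k * length (base_repr k (count_list x b)) + k)"
    by (simp add: length_Pk sum_distrib_left add.commute)
  also have "\<dots> \<le> (\<Sum>b\<in>set x. count_list x b + 2 * k)"
  proof (rule sum_mono)
    fix b assume "b \<in> set x"
    then have "0 < count_list x b" using count_list_0_iff[of x b] by simp
    from length_base_repr_le[OF k this]
    show "k * length (base_repr k (count_list x b)) + k \<le> count_list x b + 2 * k"
      by simp
  qed
  also have "\<dots> = length x + 2 * k * card (set x)"
    by (simp add: sum.distrib sum_count_set)
  finally show ?thesis .
qed

lemma two_square_le_lenbound: "2 \<le> k \<Longrightarrow> 2 * k * k \<le> (k - 1) * lenbound k"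
proof -
  assume k: "2 \<le> k"
  then have "2 * real k ^ 2 / (real k - 1) \<le> real (lenbound k)"
    unfolding lenbound_def by linarith
  then have "2 * real k ^ 2 \<le> (real k - 1) * real (lenbound k)"
    using k by (simp add: field_simps)
  then have "real (2 * k * k) \<le> real ((k - 1) * lenbound k)"
    using k by (simp add: of_nat_diff power2_eq_square)
  then show ?thesis by linarith
qed

lemma length_Pk_le_lenbound_or_less:
  assumes k: "2 \<le> k" and x: "set x \<subseteq> {..<k}"
  shows "length (Pk k x) \<le> lenbound k \<or> length (Pk k x) < length x"
proof (rule ccontr)
  assume "\<not> ?thesis"
  then have long: "lenbound k < length (Pk k x)" and "length x \<le> length (Pk k x)" by auto
  have "card (set x) \<le> k" using card_mono[OF _ x] by simp
  then have "2 * k * card (set x) \<le> 2 * k * k" by simp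
  then have "k * length (Pk k x) \<le> length x + 2 * k * k"
    using length_Pk_le[OF k, of x] by linarith
  also have "\<dots> \<le> length x + (k - 1) * lenbound k" using two_square_le_lenbound[OF k] by simp
  also have "\<dots> < length (Pk k x) + (k - 1) * length (Pk k x)"
    using \<open>length x \<le> length (Pk k x)\<close> long k by (simp add: add_le_less_mono)
  also have "\<dots> = k * length (Pk k x)" using k by (cases k) auto
  finally show False by simp
qed

locale shrinking_above =
  fixes A :: "'a set" and f :: "'a \<Rightarrow> 'a" and g :: "'a \<Rightarrow> 'b::wellorder" and L :: 'b
  assumes maps_to: "x \<in> A \<Longrightarrow> f x \<in> A"
    and shrinks: "x \<in> A \<Longrightarrow> g (f x) \<le> L \<or> g (f x) < g x"
begin

lemma funpow_in: "x \<in> A \<Longrightarrow> (f ^^ n) x \<in> A"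
  by (induction n) (simp_all add: maps_to)

lemma funpow_le_max: "x \<in> A \<Longrightarrow> g ((f ^^ n) x) \<le> max (g x) L"
proof (induction n)
  case (Suc n)
  then show ?case
    using shrinks[OF funpow_in[OF Suc.prems, of n]] by (auto simp: le_max_iff_disj)
qed simp

lemma funpow_eventually_le: "x \<in> A \<Longrightarrow> \<exists>N. \<forall>n\<ge>N. g ((f ^^ n) x) \<le> L"
proof (induction "g x" arbitrary: x rule: less_induct)
  case less
  show ?case
  proof (cases "g x \<le> L")
    case True
    then have "g ((f ^^ n) x) \<le> L" for n
      using funpow_le_max[OF less.prems, of n] by (simp add: max_def)
    then show ?thesis by blast
  next
    case False
    then have "g (f x) < g x" using shrinks[OF less.prems] by auto
    then obtain N where N: "\<forall>n\<ge>N. g ((f ^^ n) (f x)) \<le> L"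
      using less.hyps maps_to[OF less.prems] by blast
    have "g ((f ^^ n) x) \<le> L" if "Suc N \<le> n" for n
    proof -
      from that obtain m where "n = Suc m" and "N \<le> m" by (cases n) auto
      then show ?thesis using N by (simp del: funpow.simps add: funpow_Suc_right)
    qed
    then show ?thesis by blast
  qed
qed

lemma periodic_point_le:
  assumes x: "x \<in> A" and p: "1 \<le> p" and periodic: "(f ^^ p) x = x"
  shows "g x \<le> L"
proof (rule ccontr)
  assume "\<not> g x \<le> L"
  then have "max (g (f x)) L < g x" using shrinks[OF x] by auto
  moreover have "g ((f ^^ (p - 1)) (f x)) \<le> max (g (f x)) L"
    using funpow_le_max[OF maps_to[OF x]] .
  moreover have "(f ^^ (p - 1)) (f x) = (f ^^ Suc (p - 1)) x"
    by (simp only: funpow_Suc_right o_apply)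
  then have "(f ^^ (p - 1)) (f x) = x"
    using p periodic by simp
  ultimately show False by (simp add: max_def split: if_splits)
qed

end

theorem mainTheorem3:
  fixes k :: nat and x0 :: "nat list"
  assumes "k \<ge> 2" and "is_word k x0"
  shows "(\<exists>N. \<forall>n\<ge>N. length ((Pk k ^^ n) x0) \<le> lenbound k)
    \<and> (\<forall>n. length ((Pk k ^^ n) x0) \<le> max (length x0) (lenbound k))
    \<and> (\<forall>w. is_word k w \<and> Pk k w = w \<longrightarrow> length w \<le> lenbound k)
    \<and> (\<forall>w. is_word k w \<and> (\<exists>p\<ge>1. (Pk k ^^ p) w = w) \<longrightarrow> length w \<le> lenbound k)"
proof -
  define A where "A = {x. set x \<subseteq> {..<k}}"
  interpret shrinking_above A "Pk k" length "lenbound k"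
    by unfold_locales
      (use set_Pk_subset length_Pk_le_lenbound_or_less[OF assms(1)] in \<open>auto simp: A_def\<close>)
  have words: "is_word k w \<Longrightarrow> w \<in> A" for w
    unfolding A_def is_word_def by blast
  show ?thesis
    using funpow_eventually_le funpow_le_max periodic_point_le[of _ 1] periodic_point_le
      words assms(2) by auto
qed

end
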